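(* Let $G$ be a digraph and $f$ a discrete Morse function on $G$ such that every vertex $v$ with $f(v)=0$ has out-degree $1$ and in-degree $1$, and let $(\tilde G,\tilde f)$ be the $\mathcal M$-collapse of $(G,f)$. Then every pair $(\alpha,\beta)\in\mathcal M(\tilde G,\tilde f)$ has one of the forms $$\alpha=\cdots u,\ \ \beta=\cdots u\,v\qquad\text{or}\qquad \alpha=w\cdots,\ \ \beta=v\,w\cdots$$ (i.e. either $\alpha$ ends at $u$ and $\beta=\alpha v$, or $\alpha$ starts at $w$ and $\beta=v\alpha$), where $v$ is a vertex with $f(v)=0$, $u\to v\to w$ in $G$, and $u\to w$ is not a directed edge in $G$.
   Context: A digraph $G=(V,E)$ consists of a set $V$ and $E\subseteq(V\times V)\setminus\{(v,v)\}$; $(u,v)\in E$ is written $u\to v$. The out-degree (in-degree) of $v$ is the number of edges starting (ending) at $v$. An allowed elementary $n$-path is a sequence $v_0\cdots v_n$ of vertices with $v_{i-1}\to v_i\in E$ for $1\le i\le n$. For allowed elementary paths, $\gamma'<\gamma$ means $\gamma'$ is obtained from $\gamma$ by deleting some entries. A map $f:V\to[0,+\infty)$ is a discrete Morse function on $G$ if for every allowed elementary path $v_0\cdots v_n$: (i) there is at most one index $i$ with $f(v_i)=0$ such that $v_0\cdots v_{i-1}v_{i+1}\cdots v_n$ is an allowed elementary $(n-1)$-path; (ii) there is at most one vertex $u$ with $f(u)=0$ such that for some $-1\le j\le n$ the sequence $v_0\cdots v_juv_{j+1}\cdots v_n$ (meaning $uv_0\cdots v_n$ if $j=-1$, $v_0\cdots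 v_nu$ if $j=n$) is an allowed elementary $(n+1)$-path. Set $f(v_0\cdots v_n)=\sum_if(v_i)$. $\mathcal M(G,f)$ is the set of pairs $(\alpha,\beta)$ with $\alpha$ an allowed elementary $n$-path, $\beta$ an allowed elementary $(n+1)$-path for some $n\ge0$, $\alpha<\beta$ and $f(\alpha)=f(\beta)$. $\mathcal M$-collapse: under the degree hypothesis each zero $v$ of $f$ has a unique in-neighbour $u$ and out-neighbour $w$; let $Z$ be the set of zeros $v$ of $f$ for which $u\to w$ is an edge of $G$. Then $\tilde G$ has vertex set $V\setminus Z$ and edge set $E\setminus\{u\to v,\ v\to w: v\in Z\}$ (the result of successively substituting each such $u\to v\to w$ by $u\to w$), and $\tilde f=f|_{V\setminus Z}$. *)

theory Defs
  imports Complex_Main "HOL-Library.Sublist"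
begin

definition digraph :: "'a set \<Rightarrow> ('a \<times> 'a) set \<Rightarrow> bool" where
  "digraph V E \<longleftrightarrow> E \<subseteq> V \<times> V \<and> (\<forall>v. (v, v) \<notin> E)"

definition out_degree :: "('a \<times> 'a) set \<Rightarrow> 'a \<Rightarrow> nat" where
  "out_degree E v = card {w. (v, w) \<in> E}"

definition in_degree :: "('a \<times> 'a) set \<Rightarrow> 'a \<Rightarrow> nat" where
  "in_degree E v = card {u. (u, v) \<in> E}"

text \<open>Allowed elementary paths, as nonempty vertex lists; an n-path has length n+1.\<close>
definition allowed_path :: "'a set \<Rightarrow> ('a \<times> 'a) set \<Rightarrow> 'a list \<Rightarrow> bool" where
  "allowed_path V E p \<longleftrightarrow> p \<noteq> [] \<and> set p \<subseteq> V \<and>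
     (\<forall>i. Suc i < length p \<longrightarrow> (p ! i, p ! Suc i) \<in> E)"

definition delete_at :: "nat \<Rightarrow> 'a list \<Rightarrow> 'a list" where
  "delete_at i p = take i p @ drop (Suc i) p"

definition insert_at :: "nat \<Rightarrow> 'a \<Rightarrow> 'a list \<Rightarrow> 'a list" where
  "insert_at j u p = take j p @ u # drop j p"

definition discrete_morse :: "'a set \<Rightarrow> ('a \<times> 'a) set \<Rightarrow> ('a \<Rightarrow> real) \<Rightarrow> bool" where
  "discrete_morse V E f \<longleftrightarrow> (\<forall>v\<in>V. f v \<ge> 0) \<and>
     (\<forall>p. allowed_path V E p \<longrightarrow>
        (\<forall>i j. i < length p \<and> f (p ! i) = 0 \<and> allowed_path V E (delete_at i p) \<and>
               j < length p \<and> f (p ! j) = 0 \<and> allowed_path V E (delete_at j p) \<longrightarrow> i = j) \<and>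
        (\<forall>u u'. u \<in> V \<and> f u = 0 \<and> (\<exists>j\<le>length p. allowed_path V E (insert_at j u p)) \<and>
                u' \<in> V \<and> f u' = 0 \<and> (\<exists>j\<le>length p. allowed_path V E (insert_at j u' p))
                \<longrightarrow> u = u'))"

definition path_value :: "('a \<Rightarrow> real) \<Rightarrow> 'a list \<Rightarrow> real" where
  "path_value f p = sum_list (map f p)"

definition morse_pairs :: "'a set \<Rightarrow> ('a \<times> 'a) set \<Rightarrow> ('a \<Rightarrow> real) \<Rightarrow> ('a list \<times> 'a list) set" where
  "morse_pairs V E f = {(\<alpha>, \<beta>). allowed_path V E \<alpha> \<and> allowed_path V E \<beta> \<and>
     length \<beta> = Suc (length \<alpha>) \<and> subseq \<alpha> \<beta> \<and> path_value f \<alpha> = path_value f \<beta>}"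

definition collapse_zeros :: "'a set \<Rightarrow> ('a \<times> 'a) set \<Rightarrow> ('a \<Rightarrow> real) \<Rightarrow> 'a set" where
  "collapse_zeros V E f = {v \<in> V. f v = 0 \<and>
     (\<exists>u w. (u, v) \<in> E \<and> (v, w) \<in> E \<and> (u, w) \<in> E)}"

definition collapse_vertices :: "'a set \<Rightarrow> ('a \<times> 'a) set \<Rightarrow> ('a \<Rightarrow> real) \<Rightarrow> 'a set" where
  "collapse_vertices V E f = V - collapse_zeros V E f"

definition collapse_edges :: "'a set \<Rightarrow> ('a \<times> 'a) set \<Rightarrow> ('a \<Rightarrow> real) \<Rightarrow> ('a \<times> 'a) set" where
  "collapse_edges V E f = E - {(u, v) | u v. v \<in> collapse_zeros V E f \<and> (u, v) \<in> E}
                            - {(v, w) | v w. v \<in> collapse_zeros V E f \<and> (v, w) \<in> E}"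

end

theory Submission
  imports Defs
begin

text \<open>Deleting the single extra vertex x from \<open>\<beta>\<close> gives \<open>\<alpha>\<close>, so f x = 0. A zero of f that
  survives the collapse has no shortcut u \<rightarrow> w past it, and by the degree hypothesis its
  neighbours u, w are unique. Hence x cannot sit strictly inside \<open>\<beta>\<close>: its neighbours there
  would be u and w, which are adjacent in \<open>\<alpha>\<close>. So x is the last or the first vertex of \<open>\<beta>\<close>.\<close>

lemma subseq_Suc_length_imp_insert:
  assumes "subseq xs ys" and "length ys = Suc (length xs)"
  shows "\<exists>as bs x. xs = as @ bs \<and> ys = as @ x # bs"
  using assms
proof (induction ys arbitrary: xs rule: list.induct)
  case Nil
  then show ?case by simp
next
  case (Cons y ys)
  show ?case
  proof (cases "xs \<noteq> [] \<and> hd xs = y")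
    case True
    then obtain xs' where xs: "xs = y # xs'" by (cases xs) auto
    with Cons.prems have "subseq xs' ys" "length ys = Suc (length xs')" by auto
    then obtain as bs x where "xs' = as @ bs" "ys = as @ x # bs" using Cons.IH by blast
    then show ?thesis using xs by (metis append_Cons)
  next
    case False
    with Cons.prems(1) have "subseq xs ys" by (cases xs) auto
    with Cons.prems(2) have "xs = ys" by (simp add: subseq_same_length)
    then show ?thesis by (metis append_Nil)
  qed
qed

lemma allowed_path_append_edge:
  assumes "allowed_path V E (xs @ ys)" and "xs \<noteq> []" and "ys \<noteq> []"
  shows "(last xs, hd ys) \<in> E"
proof -
  have "Suc (length xs - 1) < length (xs @ ys)" using assms(2,3) by (simp add: Suc_leI)
  then have "((xs @ ys) ! (length xs - 1), (xs @ ys) ! Suc (length xs - 1)) \<in> E"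
    using assms(1) unfolding allowed_path_def by blast
  then show ?thesis using assms(2,3) by (simp add: nth_append last_conv_nth hd_conv_nth)
qed

lemma path_value_insert_eq_iff:
  "path_value f (as @ bs) = path_value f (as @ x # bs) \<longleftrightarrow> f x = 0"
  by (simp add: path_value_def)

lemma card_eq_1_iff_ex1: "card A = 1 \<longleftrightarrow> (\<exists>!a. a \<in> A)"
  by (auto simp: card_1_singleton_iff)

lemma in_degree_eq_1_iff: "in_degree E v = 1 \<longleftrightarrow> (\<exists>!u. (u, v) \<in> E)"
  unfolding in_degree_def card_eq_1_iff_ex1 by simp

lemma out_degree_eq_1_iff: "out_degree E v = 1 \<longleftrightarrow> (\<exists>!w. (v, w) \<in> E)"
  unfolding out_degree_def card_eq_1_iff_ex1 by simp

lemma collapse_edges_subset: "collapse_edges V E f \<subseteq> E"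
  unfolding collapse_edges_def by blast

lemma collapse_vertices_zero_no_shortcut:
  assumes "x \<in> collapse_vertices V E f" and "f x = 0"
    and "(u, x) \<in> E" and "(x, w) \<in> E"
  shows "(u, w) \<notin> E"
  using assms unfolding collapse_vertices_def collapse_zeros_def by blast

theorem proposition6p1:
  fixes V :: "'a set" and E :: "('a \<times> 'a) set" and f :: "'a \<Rightarrow> real"
  assumes "digraph V E"
    and "discrete_morse V E f"
    and "\<And>v. v \<in> V \<Longrightarrow> f v = 0 \<Longrightarrow> out_degree E v = 1 \<and> in_degree E v = 1"
    and "(\<alpha>, \<beta>) \<in> morse_pairs (collapse_vertices V E f) (collapse_edges V E f) f"
  shows "\<exists>u v w. v \<in> V \<and> f v = 0 \<and> (u, v) \<in> E \<and> (v, w) \<in> E \<and> (u, w) \<notin> E \<and>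
           ((last \<alpha> = u \<and> \<beta> = \<alpha> @ [v]) \<or> (hd \<alpha> = w \<and> \<beta> = v # \<alpha>))"
proof -
  let ?V = "collapse_vertices V E f" and ?E = "collapse_edges V E f"
  have \<alpha>: "allowed_path ?V ?E \<alpha>" and \<beta>: "allowed_path ?V ?E \<beta>"
    using assms(4) unfolding morse_pairs_def by auto
  obtain as bs x where \<alpha>_eq: "\<alpha> = as @ bs" and \<beta>_eq: "\<beta> = as @ x # bs"
    using assms(4) subseq_Suc_length_imp_insert unfolding morse_pairs_def by blast
  have fx: "f x = 0"
    using assms(4) unfolding morse_pairs_def \<alpha>_eq \<beta>_eq by (simp add: path_value_insert_eq_iff)
  have x: "x \<in> ?V" using \<beta> unfolding allowed_path_def \<beta>_eq by auto
  then have "x \<in> V" unfolding collapse_vertices_def by blast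
  then obtain u w where u: "(u, x) \<in> E" "\<And>u'. (u', x) \<in> E \<Longrightarrow> u' = u"
    and w: "(x, w) \<in> E" "\<And>w'. (x, w') \<in> E \<Longrightarrow> w' = w"
    using assms(3) fx by (metis in_degree_eq_1_iff out_degree_eq_1_iff)
  have uw: "(u, w) \<notin> E" using collapse_vertices_zero_no_shortcut[OF x fx u(1) w(1)] .
  note collapse_edge = collapse_edges_subset[THEN subsetD]
  have last_as: "last as = u" if "as \<noteq> []"
    using allowed_path_append_edge[of ?V ?E as "x # bs"] \<beta> \<beta>_eq that collapse_edge u(2)
    by simp blast
  have hd_bs: "hd bs = w" if "bs \<noteq> []"
    using allowed_path_append_edge[of ?V ?E "as @ [x]" bs] \<beta> \<beta>_eq that collapse_edge w(2)
    by simp blast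
  have "as = [] \<or> bs = []"
    using allowed_path_append_edge[of ?V ?E as bs] \<alpha> \<alpha>_eq collapse_edge last_as hd_bs uw
    by blast
  moreover have "\<alpha> \<noteq> []" using \<alpha> unfolding allowed_path_def by blast
  ultimately have "(last \<alpha> = u \<and> \<beta> = \<alpha> @ [x]) \<or> (hd \<alpha> = w \<and> \<beta> = x # \<alpha>)"
    using \<alpha>_eq \<beta>_eq last_as hd_bs by auto
  then show ?thesis using \<open>x \<in> V\<close> fx u(1) w(1) uw by blast
qed

end
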